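(* With the notation of the context, $H\varepsilon\cdot\lambda^*M\cdot S\lambda=\lambda S\cdot M\lambda^*\cdot\varepsilon H:SMH\to HMS$.
   Context: $\mathcal A$ is cocomplete, $H$ is an endofunctor, $(M,\eta)$ is a pointed endofunctor (a functor with natural transformation $\eta:\mathrm{Id}\to M$), and $\lambda:MH\to HM$ is a natural transformation with $\lambda\cdot\eta H=H\eta$. $M^n$ is the $n$-fold composite. $S$ is the colimit (computed objectwise) of the diagram consisting of all $M^n$ and all natural transformations $M^i\eta M^j:M^{i+j}\to M^{i+1+j}$, with injections $\mathrm{in}^n:M^n\to S$ (so $SG$ is the colimit with injections $\mathrm{in}^nG$ for any endofunctor $G$). Let $\varepsilon:SM\to MS$ be determined by $\varepsilon\cdot\mathrm{in}^nM=M\mathrm{in}^n$. Define $\lambda^0=\mathrm{id}_H$, $\lambda^{n+1}=\lambda M^n\cdot M\lambda^n:M^{n+1}H\to HM^{n+1}$, and let $\lambda^*:SH\to HS$ be determined by $\lambda^*\cdot\mathrm{in}^nH=H\mathrm{in}^n\cdot\lambda^n$ for all $n$. *)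

theory Defs
  imports Main
begin

text \<open>A minimal rendering of (locally small-agnostic) categories: objects of type 'o,
arrows of type 'a, with carrier sets, domain, codomain, identities and composition
(Cmp C g f is "g after f").\<close>

record ('o, 'a) cat =
  Ob  :: "'o set"
  Ar  :: "'a set"
  Dom :: "'a \<Rightarrow> 'o"
  Cod :: "'a \<Rightarrow> 'o"
  Id  :: "'o \<Rightarrow> 'a"
  Cmp :: "'a \<Rightarrow> 'a \<Rightarrow> 'a"

definition hom :: "('o, 'a) cat \<Rightarrow> 'o \<Rightarrow> 'o \<Rightarrow> 'a set" where
  "hom C X Y = {f \<in> Ar C. Dom C f = X \<and> Cod C f = Y}"

definition category :: "('o, 'a) cat \<Rightarrow> bool" where
  "category C \<longleftrightarrow>
     (\<forall>f \<in> Ar C. Dom C f \<in> Ob C \<and> Cod C f \<in> Ob C) \<and>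
     (\<forall>X \<in> Ob C. Id C X \<in> hom C X X) \<and>
     (\<forall>X Y Z f g. f \<in> hom C X Y \<longrightarrow> g \<in> hom C Y Z \<longrightarrow> Cmp C g f \<in> hom C X Z) \<and>
     (\<forall>X Y f. f \<in> hom C X Y \<longrightarrow> Cmp C (Id C Y) f = f \<and> Cmp C f (Id C X) = f) \<and>
     (\<forall>W X Y Z f g h. f \<in> hom C W X \<longrightarrow> g \<in> hom C X Y \<longrightarrow> h \<in> hom C Y Z \<longrightarrow>
        Cmp C h (Cmp C g f) = Cmp C (Cmp C h g) f)"

definition endofunctor :: "('o, 'a) cat \<Rightarrow> ('o \<Rightarrow> 'o) \<Rightarrow> ('a \<Rightarrow> 'a) \<Rightarrow> bool" where
  "endofunctor C Fo Fa \<longleftrightarrow>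
     (\<forall>X \<in> Ob C. Fo X \<in> Ob C) \<and>
     (\<forall>X Y f. f \<in> hom C X Y \<longrightarrow> Fa f \<in> hom C (Fo X) (Fo Y)) \<and>
     (\<forall>X \<in> Ob C. Fa (Id C X) = Id C (Fo X)) \<and>
     (\<forall>X Y Z f g. f \<in> hom C X Y \<longrightarrow> g \<in> hom C Y Z \<longrightarrow> Fa (Cmp C g f) = Cmp C (Fa g) (Fa f))"

definition nat_trans :: "('o, 'a) cat \<Rightarrow> ('o \<Rightarrow> 'o) \<Rightarrow> ('a \<Rightarrow> 'a) \<Rightarrow> ('o \<Rightarrow> 'o) \<Rightarrow> ('a \<Rightarrow> 'a)
    \<Rightarrow> ('o \<Rightarrow> 'a) \<Rightarrow> bool" where
  "nat_trans C Fo Fa Go Ga \<alpha> \<longleftrightarrow>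
     (\<forall>X \<in> Ob C. \<alpha> X \<in> hom C (Fo X) (Go X)) \<and>
     (\<forall>X Y f. f \<in> hom C X Y \<longrightarrow> Cmp C (\<alpha> Y) (Fa f) = Cmp C (Ga f) (\<alpha> X))"

text \<open>The diagram D_X consists of all objects M^n X and all arrows
  (M^i eta M^j)_X = M^i (eta (M^j X)) : M^(i+j) X \<rightarrow> M^(i+1+j) X.\<close>

definition chain_cocone :: "('o, 'a) cat \<Rightarrow> ('o \<Rightarrow> 'o) \<Rightarrow> ('a \<Rightarrow> 'a) \<Rightarrow> ('o \<Rightarrow> 'a)
    \<Rightarrow> 'o \<Rightarrow> 'o \<Rightarrow> (nat \<Rightarrow> 'a) \<Rightarrow> bool" where
  "chain_cocone C Mo Ma \<eta> X Y c \<longleftrightarrow>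
     (\<forall>n. c n \<in> hom C ((Mo ^^ n) X) Y) \<and>
     (\<forall>i j. Cmp C (c (i + 1 + j)) ((Ma ^^ i) (\<eta> ((Mo ^^ j) X))) = c (i + j))"

definition chain_colimit :: "('o, 'a) cat \<Rightarrow> ('o \<Rightarrow> 'o) \<Rightarrow> ('a \<Rightarrow> 'a) \<Rightarrow> ('o \<Rightarrow> 'a)
    \<Rightarrow> 'o \<Rightarrow> 'o \<Rightarrow> (nat \<Rightarrow> 'a) \<Rightarrow> bool" where
  "chain_colimit C Mo Ma \<eta> X L inc \<longleftrightarrow>
     L \<in> Ob C \<and> chain_cocone C Mo Ma \<eta> X L inc \<and>
     (\<forall>Y c. Y \<in> Ob C \<longrightarrow> chain_cocone C Mo Ma \<eta> X Y c \<longrightarrow>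
        (\<exists>!u. u \<in> hom C L Y \<and> (\<forall>n. Cmp C u (inc n) = c n)))"

fun lam_pow :: "('o, 'a) cat \<Rightarrow> ('o \<Rightarrow> 'o) \<Rightarrow> ('a \<Rightarrow> 'a) \<Rightarrow> ('o \<Rightarrow> 'o) \<Rightarrow> ('o \<Rightarrow> 'a)
    \<Rightarrow> nat \<Rightarrow> 'o \<Rightarrow> 'a" where
  "lam_pow C Mo Ma Ho lam 0 X = Id C (Ho X)"
| "lam_pow C Mo Ma Ho lam (Suc n) X = Cmp C (lam ((Mo ^^ n) X)) (Ma (lam_pow C Mo Ma Ho lam n X))"

end

theory Submission
  imports Defs
begin

text \<open>Both sides are arrows out of the colimit \<open>S M H X\<close>, so it suffices to compare them after
  precomposing with each injection \<open>in\<^sup>n (M H X)\<close>. Using naturality of \<open>in\<^sup>n\<close>, the defining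
  equations of \<open>\<epsilon>\<close> and \<open>\<lambda>\<^sup>*\<close> and naturality of \<open>\<lambda>\<close>, both composites reduce to
  \<open>H (M in\<^sup>n X) \<cdot> \<lambda>\<^sup>n\<^sup>+\<^sup>1 X\<close>; for the left side this uses \<open>\<lambda>\<^sup>n M \<cdot> M\<^sup>n \<lambda> = \<lambda>\<^sup>n\<^sup>+\<^sup>1\<close>,
  the recursion for \<open>\<lambda>\<^sup>n\<close> read from the other end.\<close>

lemma category_comp_in_hom:
  "category C \<Longrightarrow> f \<in> hom C X Y \<Longrightarrow> g \<in> hom C Y Z \<Longrightarrow> Cmp C g f \<in> hom C X Z"
  unfolding category_def by blast

lemma category_assoc:
  "category C \<Longrightarrow> f \<in> hom C W X \<Longrightarrow> g \<in> hom C X Y \<Longrightarrow> h \<in> hom C Y Z \<Longrightarrow>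
    Cmp C h (Cmp C g f) = Cmp C (Cmp C h g) f"
  unfolding category_def by blast

lemma category_id_left: "category C \<Longrightarrow> f \<in> hom C X Y \<Longrightarrow> Cmp C (Id C Y) f = f"
  unfolding category_def by blast

lemma category_id_right: "category C \<Longrightarrow> f \<in> hom C X Y \<Longrightarrow> Cmp C f (Id C X) = f"
  unfolding category_def by blast

lemma category_id_in_hom: "category C \<Longrightarrow> X \<in> Ob C \<Longrightarrow> Id C X \<in> hom C X X"
  unfolding category_def by blast

lemma hom_cod_in_Ob: "category C \<Longrightarrow> f \<in> hom C X Y \<Longrightarrow> Y \<in> Ob C"
  unfolding category_def hom_def by auto

lemma endofunctor_Ob: "endofunctor C Fo Fa \<Longrightarrow> X \<in> Ob C \<Longrightarrow> Fo X \<in> Ob C"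
  unfolding endofunctor_def by blast

lemma endofunctor_hom: "endofunctor C Fo Fa \<Longrightarrow> f \<in> hom C X Y \<Longrightarrow> Fa f \<in> hom C (Fo X) (Fo Y)"
  unfolding endofunctor_def by blast

lemma endofunctor_comp:
  "endofunctor C Fo Fa \<Longrightarrow> f \<in> hom C X Y \<Longrightarrow> g \<in> hom C Y Z \<Longrightarrow>
    Fa (Cmp C g f) = Cmp C (Fa g) (Fa f)"
  unfolding endofunctor_def by blast

lemma endofunctor_id: "endofunctor C Fo Fa \<Longrightarrow> X \<in> Ob C \<Longrightarrow> Fa (Id C X) = Id C (Fo X)"
  unfolding endofunctor_def by blast

lemma endofunctor_funpow:
  assumes F: "endofunctor C Fo Fa"
  shows "endofunctor C (Fo ^^ n) (Fa ^^ n)"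
proof (induction n)
  case 0
  show ?case unfolding endofunctor_def by simp
next
  case (Suc n)
  show ?case unfolding endofunctor_def
    using endofunctor_Ob[OF F] endofunctor_Ob[OF Suc.IH] endofunctor_hom[OF F]
      endofunctor_hom[OF Suc.IH] endofunctor_id[OF F] endofunctor_id[OF Suc.IH]
      endofunctor_comp[OF F] endofunctor_comp[OF Suc.IH]
    by (simp, meson)
qed

lemma nat_trans_hom: "nat_trans C Fo Fa Go Ga \<alpha> \<Longrightarrow> X \<in> Ob C \<Longrightarrow> \<alpha> X \<in> hom C (Fo X) (Go X)"
  unfolding nat_trans_def by blast

lemma nat_trans_natural:
  "nat_trans C Fo Fa Go Ga \<alpha> \<Longrightarrow> f \<in> hom C X Y \<Longrightarrow> Cmp C (\<alpha> Y) (Fa f) = Cmp C (Ga f) (\<alpha> X)"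
  unfolding nat_trans_def by blast

lemma chain_arrow_in_hom:
  assumes M: "endofunctor C Mo Ma" and eta: "nat_trans C id id Mo Ma \<eta>" and X: "X \<in> Ob C"
  shows "(Ma ^^ i) (\<eta> ((Mo ^^ j) X)) \<in> hom C ((Mo ^^ (i + j)) X) ((Mo ^^ (i + 1 + j)) X)"
proof -
  have "\<eta> ((Mo ^^ j) X) \<in> hom C ((Mo ^^ j) X) (Mo ((Mo ^^ j) X))"
    using nat_trans_hom[OF eta endofunctor_Ob[OF endofunctor_funpow[OF M] X]] by simp
  from endofunctor_hom[OF endofunctor_funpow[OF M] this, of i]
  show ?thesis
    by (simp add: funpow_add funpow_swap1)
qed

lemma chain_colimit_arrow_eqI:
  assumes cat: "category C" and M: "endofunctor C Mo Ma" and eta: "nat_trans C id id Mo Ma \<eta>"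
    and X: "X \<in> Ob C" and colim: "chain_colimit C Mo Ma \<eta> X L inc"
    and u: "u \<in> hom C L Y" and v: "v \<in> hom C L Y"
    and eq: "\<And>n. Cmp C u (inc n) = Cmp C v (inc n)"
  shows "u = v"
proof -
  have cocone: "chain_cocone C Mo Ma \<eta> X L inc"
    using colim unfolding chain_colimit_def by blast
  then have inc_hom: "\<And>n. inc n \<in> hom C ((Mo ^^ n) X) L"
    unfolding chain_cocone_def by blast
  have "chain_cocone C Mo Ma \<eta> X Y (\<lambda>n. Cmp C u (inc n))"
    unfolding chain_cocone_def
  proof (intro conjI allI)
    fix n
    show "Cmp C u (inc n) \<in> hom C ((Mo ^^ n) X) Y"
      using category_comp_in_hom[OF cat inc_hom u] .
  next
    fix i j
    show "Cmp C (Cmp C u (inc (i + 1 + j))) ((Ma ^^ i) (\<eta> ((Mo ^^ j) X))) = Cmp C u (inc (i + j))"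
      using category_assoc[OF cat chain_arrow_in_hom[OF M eta X] inc_hom u] cocone
      unfolding chain_cocone_def by simp
  qed
  then have "\<exists>!w. w \<in> hom C L Y \<and> (\<forall>n. Cmp C w (inc n) = Cmp C u (inc n))"
    using colim hom_cod_in_Ob[OF cat u] unfolding chain_colimit_def by blast
  then show ?thesis
    using u v eq by metis
qed

lemma lam_pow_in_hom:
  assumes cat: "category C" and H: "endofunctor C Ho Ha" and M: "endofunctor C Mo Ma"
    and lam_hom: "\<And>X. X \<in> Ob C \<Longrightarrow> lam X \<in> hom C (Mo (Ho X)) (Ho (Mo X))"
    and X: "X \<in> Ob C"
  shows "lam_pow C Mo Ma Ho lam n X \<in> hom C ((Mo ^^ n) (Ho X)) (Ho ((Mo ^^ n) X))"
proof (induction n)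
  case 0
  show ?case using category_id_in_hom[OF cat endofunctor_Ob[OF H X]] by simp
next
  case (Suc n)
  show ?case
    using category_comp_in_hom[OF cat endofunctor_hom[OF M Suc.IH]
        lam_hom[OF endofunctor_Ob[OF endofunctor_funpow[OF M] X]]]
    by simp
qed

lemma lam_pow_Suc_conv:
  assumes cat: "category C" and H: "endofunctor C Ho Ha" and M: "endofunctor C Mo Ma"
    and lam_hom: "\<And>X. X \<in> Ob C \<Longrightarrow> lam X \<in> hom C (Mo (Ho X)) (Ho (Mo X))"
    and X: "X \<in> Ob C"
  shows "Cmp C (lam_pow C Mo Ma Ho lam n (Mo X)) ((Ma ^^ n) (lam X)) = lam_pow C Mo Ma Ho lam (Suc n) X"
proof (induction n)
  case 0
  show ?case
    using endofunctor_id[OF M endofunctor_Ob[OF H X]]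
      category_id_left[OF cat lam_hom[OF X]] category_id_right[OF cat lam_hom[OF X]]
    by simp
next
  case (Suc n)
  let ?lp = "lam_pow C Mo Ma Ho lam"
  have MX: "Mo X \<in> Ob C" using endofunctor_Ob[OF M X] .
  have Mn_lam: "(Ma ^^ n) (lam X) \<in> hom C ((Mo ^^ n) (Mo (Ho X))) ((Mo ^^ n) (Ho (Mo X)))"
    using endofunctor_hom[OF endofunctor_funpow[OF M] lam_hom[OF X]] .
  have lp: "?lp n (Mo X) \<in> hom C ((Mo ^^ n) (Ho (Mo X))) (Ho ((Mo ^^ n) (Mo X)))"
    using lam_pow_in_hom[OF cat H M lam_hom MX] .
  have lam_MnMX: "lam ((Mo ^^ n) (Mo X)) \<in> hom C (Mo (Ho ((Mo ^^ n) (Mo X)))) (Ho (Mo ((Mo ^^ n) (Mo X))))"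
    using lam_hom[OF endofunctor_Ob[OF endofunctor_funpow[OF M] MX]] .
  have "Cmp C (?lp (Suc n) (Mo X)) ((Ma ^^ Suc n) (lam X))
      = Cmp C (Cmp C (lam ((Mo ^^ n) (Mo X))) (Ma (?lp n (Mo X)))) (Ma ((Ma ^^ n) (lam X)))"
    by simp
  also have "\<dots> = Cmp C (lam ((Mo ^^ n) (Mo X))) (Cmp C (Ma (?lp n (Mo X))) (Ma ((Ma ^^ n) (lam X))))"
    using category_assoc[OF cat endofunctor_hom[OF M Mn_lam] endofunctor_hom[OF M lp] lam_MnMX]
    by simp
  also have "\<dots> = Cmp C (lam ((Mo ^^ n) (Mo X))) (Ma (?lp (Suc n) X))"
    using endofunctor_comp[OF M Mn_lam lp] Suc.IH by simp
  also have "\<dots> = ?lp (Suc (Suc n)) X"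
    by (simp add: funpow_swap1)
  finally show ?case .
qed

text \<open>The hypothesis \<open>\<lambda> \<cdot> \<eta>H = H\<eta>\<close> is omitted: it is what makes
  \<open>\<lambda>\<^sup>*\<close> well defined, but here \<open>\<lambda>\<^sup>*\<close> is given together with its defining equations.\<close>

locale iterated_distributive_law =
  fixes C :: "('o, 'a) cat"
    and Ho Mo So :: "'o \<Rightarrow> 'o" and Ha Ma Sa :: "'a \<Rightarrow> 'a"
    and \<eta> lam \<epsilon> lams :: "'o \<Rightarrow> 'a"
    and inc :: "nat \<Rightarrow> 'o \<Rightarrow> 'a"
  assumes cat: "category C"
    and H: "endofunctor C Ho Ha"
    and M: "endofunctor C Mo Ma"
    and eta: "nat_trans C id id Mo Ma \<eta>"
    and lam_nat: "nat_trans C (Mo \<circ> Ho) (Ma \<circ> Ha) (Ho \<circ> Mo) (Ha \<circ> Ma) lam"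
    and S: "endofunctor C So Sa"
    and inc_nat: "\<forall>n. nat_trans C (Mo ^^ n) (Ma ^^ n) So Sa (inc n)"
    and colim: "\<forall>X \<in> Ob C. chain_colimit C Mo Ma \<eta> X (So X) (\<lambda>n. inc n X)"
    and eps_hom: "\<forall>X \<in> Ob C. \<epsilon> X \<in> hom C (So (Mo X)) (Mo (So X))"
    and eps_def: "\<forall>X \<in> Ob C. \<forall>n. Cmp C (\<epsilon> X) (inc n (Mo X)) = Ma (inc n X)"
    and lams_hom: "\<forall>X \<in> Ob C. lams X \<in> hom C (So (Ho X)) (Ho (So X))"
    and lams_def: "\<forall>X \<in> Ob C. \<forall>n.
          Cmp C (lams X) (inc n (Ho X)) = Cmp C (Ha (inc n X)) (lam_pow C Mo Ma Ho lam n X)"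
begin

abbreviation "lp \<equiv> lam_pow C Mo Ma Ho lam"

lemma lam_in_hom: "X \<in> Ob C \<Longrightarrow> lam X \<in> hom C (Mo (Ho X)) (Ho (Mo X))"
  using nat_trans_hom[OF lam_nat] by simp

lemma lam_natural: "f \<in> hom C X Y \<Longrightarrow> Cmp C (lam Y) (Ma (Ha f)) = Cmp C (Ha (Ma f)) (lam X)"
  using nat_trans_natural[OF lam_nat] by simp

lemma inc_in_hom: "X \<in> Ob C \<Longrightarrow> inc n X \<in> hom C ((Mo ^^ n) X) (So X)"
  using nat_trans_hom inc_nat by metis

lemma inc_natural: "f \<in> hom C X Y \<Longrightarrow> Cmp C (inc n Y) ((Ma ^^ n) f) = Cmp C (Sa f) (inc n X)"
  using nat_trans_natural inc_nat by metis

lemma lhs_comp_inc: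
  assumes X: "X \<in> Ob C"
  shows "Cmp C (Cmp C (Ha (\<epsilon> X)) (Cmp C (lams (Mo X)) (Sa (lam X)))) (inc n (Mo (Ho X)))
    = Cmp C (Ha (Ma (inc n X))) (lp (Suc n) X)"
proof -
  have MX: "Mo X \<in> Ob C" using endofunctor_Ob[OF M X] .
  have HMX: "Ho (Mo X) \<in> Ob C" using endofunctor_Ob[OF H MX] .
  have inc_MHX: "inc n (Mo (Ho X)) \<in> hom C ((Mo ^^ n) (Mo (Ho X))) (So (Mo (Ho X)))"
    using inc_in_hom endofunctor_Ob[OF M endofunctor_Ob[OF H X]] .
  have S_lam: "Sa (lam X) \<in> hom C (So (Mo (Ho X))) (So (Ho (Mo X)))"
    using endofunctor_hom[OF S lam_in_hom[OF X]] .
  have lams_MX: "lams (Mo X) \<in> hom C (So (Ho (Mo X))) (Ho (So (Mo X)))"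
    using lams_hom MX by blast
  have H_eps: "Ha (\<epsilon> X) \<in> hom C (Ho (So (Mo X))) (Ho (Mo (So X)))"
    using endofunctor_hom[OF H] eps_hom X by blast
  have Mn_lam: "(Ma ^^ n) (lam X) \<in> hom C ((Mo ^^ n) (Mo (Ho X))) ((Mo ^^ n) (Ho (Mo X)))"
    using endofunctor_hom[OF endofunctor_funpow[OF M] lam_in_hom[OF X]] .
  have inc_HMX: "inc n (Ho (Mo X)) \<in> hom C ((Mo ^^ n) (Ho (Mo X))) (So (Ho (Mo X)))"
    using inc_in_hom[OF HMX] .
  have lp_MX: "lp n (Mo X) \<in> hom C ((Mo ^^ n) (Ho (Mo X))) (Ho ((Mo ^^ n) (Mo X)))"
    using lam_pow_in_hom[OF cat H M lam_in_hom MX] .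
  have H_inc: "Ha (inc n (Mo X)) \<in> hom C (Ho ((Mo ^^ n) (Mo X))) (Ho (So (Mo X)))"
    using endofunctor_hom[OF H inc_in_hom[OF MX]] .
  have "Cmp C (Cmp C (Ha (\<epsilon> X)) (Cmp C (lams (Mo X)) (Sa (lam X)))) (inc n (Mo (Ho X)))
      = Cmp C (Ha (\<epsilon> X)) (Cmp C (lams (Mo X)) (Cmp C (Sa (lam X)) (inc n (Mo (Ho X)))))"
    using category_assoc[OF cat inc_MHX S_lam lams_MX]
      category_assoc[OF cat inc_MHX category_comp_in_hom[OF cat S_lam lams_MX] H_eps]
      category_assoc[OF cat S_lam lams_MX H_eps]
    by simp
  also have "\<dots> = Cmp C (Ha (\<epsilon> X)) (Cmp C (lams (Mo X)) (Cmp C (inc n (Ho (Mo X))) ((Ma ^^ n) (lam X))))"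
    using inc_natural[OF lam_in_hom[OF X]] by simp
  also have "\<dots> = Cmp C (Ha (\<epsilon> X)) (Cmp C (Cmp C (Ha (inc n (Mo X))) (lp n (Mo X))) ((Ma ^^ n) (lam X)))"
    using category_assoc[OF cat Mn_lam inc_HMX lams_MX] lams_def MX by simp
  also have "\<dots> = Cmp C (Cmp C (Ha (\<epsilon> X)) (Ha (inc n (Mo X)))) (Cmp C (lp n (Mo X)) ((Ma ^^ n) (lam X)))"
    using category_assoc[OF cat Mn_lam lp_MX H_inc]
      category_assoc[OF cat category_comp_in_hom[OF cat Mn_lam lp_MX] H_inc H_eps]
    by simp
  also have "\<dots> = Cmp C (Ha (Ma (inc n X))) (lp (Suc n) X)"
  proof -
    have "Cmp C (Ha (\<epsilon> X)) (Ha (inc n (Mo X))) = Ha (Cmp C (\<epsilon> X) (inc n (Mo X)))"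
      using endofunctor_comp[OF H inc_in_hom[OF MX] eps_hom[rule_format, OF X]] by simp
    then show ?thesis
      using eps_def X lam_pow_Suc_conv[OF cat H M lam_in_hom X] by simp
  qed
  finally show ?thesis .
qed

lemma rhs_comp_inc:
  assumes X: "X \<in> Ob C"
  shows "Cmp C (Cmp C (lam (So X)) (Cmp C (Ma (lams X)) (\<epsilon> (Ho X)))) (inc n (Mo (Ho X)))
    = Cmp C (Ha (Ma (inc n X))) (lp (Suc n) X)"
proof -
  have HX: "Ho X \<in> Ob C" using endofunctor_Ob[OF H X] .
  have inc_MHX: "inc n (Mo (Ho X)) \<in> hom C ((Mo ^^ n) (Mo (Ho X))) (So (Mo (Ho X)))"
    using inc_in_hom endofunctor_Ob[OF M HX] .
  have eps_HX: "\<epsilon> (Ho X) \<in> hom C (So (Mo (Ho X))) (Mo (So (Ho X)))"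
    using eps_hom HX by blast
  have M_lams: "Ma (lams X) \<in> hom C (Mo (So (Ho X))) (Mo (Ho (So X)))"
    using endofunctor_hom[OF M] lams_hom X by blast
  have lam_SX: "lam (So X) \<in> hom C (Mo (Ho (So X))) (Ho (Mo (So X)))"
    using lam_in_hom endofunctor_Ob[OF S X] .
  have inc_X: "inc n X \<in> hom C ((Mo ^^ n) X) (So X)"
    using inc_in_hom[OF X] .
  have lp_X: "lp n X \<in> hom C ((Mo ^^ n) (Ho X)) (Ho ((Mo ^^ n) X))"
    using lam_pow_in_hom[OF cat H M lam_in_hom X] .
  have H_inc: "Ha (inc n X) \<in> hom C (Ho ((Mo ^^ n) X)) (Ho (So X))"
    using endofunctor_hom[OF H inc_X] .
  have M_lp: "Ma (lp n X) \<in> hom C (Mo ((Mo ^^ n) (Ho X))) (Mo (Ho ((Mo ^^ n) X)))"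
    using endofunctor_hom[OF M lp_X] .
  have HM_inc: "Ha (Ma (inc n X)) \<in> hom C (Ho (Mo ((Mo ^^ n) X))) (Ho (Mo (So X)))"
    using endofunctor_hom[OF H endofunctor_hom[OF M inc_X]] .
  have lam_MnX: "lam ((Mo ^^ n) X) \<in> hom C (Mo (Ho ((Mo ^^ n) X))) (Ho (Mo ((Mo ^^ n) X)))"
    using lam_in_hom endofunctor_Ob[OF endofunctor_funpow[OF M] X] .
  have "Cmp C (Cmp C (lam (So X)) (Cmp C (Ma (lams X)) (\<epsilon> (Ho X)))) (inc n (Mo (Ho X)))
      = Cmp C (lam (So X)) (Cmp C (Ma (lams X)) (Cmp C (\<epsilon> (Ho X)) (inc n (Mo (Ho X)))))"
    using category_assoc[OF cat inc_MHX eps_HX M_lams]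
      category_assoc[OF cat inc_MHX category_comp_in_hom[OF cat eps_HX M_lams] lam_SX]
    by simp
  also have "\<dots> = Cmp C (lam (So X)) (Ma (Cmp C (lams X) (inc n (Ho X))))"
    using eps_def HX endofunctor_comp[OF M inc_in_hom[OF HX] lams_hom[rule_format, OF X]] by simp
  also have "\<dots> = Cmp C (lam (So X)) (Cmp C (Ma (Ha (inc n X))) (Ma (lp n X)))"
    using lams_def X endofunctor_comp[OF M lp_X H_inc] by simp
  also have "\<dots> = Cmp C (Cmp C (Ha (Ma (inc n X))) (lam ((Mo ^^ n) X))) (Ma (lp n X))"
    using category_assoc[OF cat M_lp endofunctor_hom[OF M H_inc] lam_SX] lam_natural[OF inc_X]
    by simp
  also have "\<dots> = Cmp C (Ha (Ma (inc n X))) (lp (Suc n) X)"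
    using category_assoc[OF cat M_lp lam_MnX HM_inc] by simp
  finally show ?thesis .
qed

lemma lifting_compatible:
  assumes X: "X \<in> Ob C"
  shows "Cmp C (Ha (\<epsilon> X)) (Cmp C (lams (Mo X)) (Sa (lam X))) =
    Cmp C (lam (So X)) (Cmp C (Ma (lams X)) (\<epsilon> (Ho X)))"
proof -
  have MX: "Mo X \<in> Ob C" and HX: "Ho X \<in> Ob C" and SX: "So X \<in> Ob C"
    using endofunctor_Ob[OF M X] endofunctor_Ob[OF H X] endofunctor_Ob[OF S X] .
  have MHX: "Mo (Ho X) \<in> Ob C"
    using endofunctor_Ob[OF M HX] .
  have lhs_hom: "Cmp C (Ha (\<epsilon> X)) (Cmp C (lams (Mo X)) (Sa (lam X)))
      \<in> hom C (So (Mo (Ho X))) (Ho (Mo (So X)))"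
    using category_comp_in_hom[OF cat
        category_comp_in_hom[OF cat endofunctor_hom[OF S lam_in_hom[OF X]] lams_hom[rule_format, OF MX]]
        endofunctor_hom[OF H eps_hom[rule_format, OF X]]] .
  have rhs_hom: "Cmp C (lam (So X)) (Cmp C (Ma (lams X)) (\<epsilon> (Ho X)))
      \<in> hom C (So (Mo (Ho X))) (Ho (Mo (So X)))"
    using category_comp_in_hom[OF cat
        category_comp_in_hom[OF cat eps_hom[rule_format, OF HX] endofunctor_hom[OF M lams_hom[rule_format, OF X]]]
        lam_in_hom[OF SX]] .
  show ?thesis
    by (rule chain_colimit_arrow_eqI[OF cat M eta MHX colim[rule_format, OF MHX] lhs_hom rhs_hom])
      (simp only: lhs_comp_inc[OF X] rhs_comp_inc[OF X])
qed

end

theorem mainTheorem17: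
  fixes C :: "('o, 'a) cat"
    and Ho Mo So :: "'o \<Rightarrow> 'o" and Ha Ma Sa :: "'a \<Rightarrow> 'a"
    and \<eta> lam \<epsilon> lams :: "'o \<Rightarrow> 'a"
    and inc :: "nat \<Rightarrow> 'o \<Rightarrow> 'a"
  assumes cat: "category C"
    and H: "endofunctor C Ho Ha"
    and M: "endofunctor C Mo Ma"
    and eta: "nat_trans C id id Mo Ma \<eta>"
    and lam_nat: "nat_trans C (Mo \<circ> Ho) (Ma \<circ> Ha) (Ho \<circ> Mo) (Ha \<circ> Ma) lam"
    and lam_eta: "\<forall>X \<in> Ob C. Cmp C (lam X) (\<eta> (Ho X)) = Ha (\<eta> X)"
    and S: "endofunctor C So Sa"
    and inc_nat: "\<forall>n. nat_trans C (Mo ^^ n) (Ma ^^ n) So Sa (inc n)"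
    and colim: "\<forall>X \<in> Ob C. chain_colimit C Mo Ma \<eta> X (So X) (\<lambda>n. inc n X)"
    and eps_hom: "\<forall>X \<in> Ob C. \<epsilon> X \<in> hom C (So (Mo X)) (Mo (So X))"
    and eps_def: "\<forall>X \<in> Ob C. \<forall>n. Cmp C (\<epsilon> X) (inc n (Mo X)) = Ma (inc n X)"
    and lams_hom: "\<forall>X \<in> Ob C. lams X \<in> hom C (So (Ho X)) (Ho (So X))"
    and lams_def: "\<forall>X \<in> Ob C. \<forall>n.
          Cmp C (lams X) (inc n (Ho X)) = Cmp C (Ha (inc n X)) (lam_pow C Mo Ma Ho lam n X)"
  shows "\<forall>X \<in> Ob C.
     Cmp C (Ha (\<epsilon> X)) (Cmp C (lams (Mo X)) (Sa (lam X))) =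
     Cmp C (lam (So X)) (Cmp C (Ma (lams X)) (\<epsilon> (Ho X)))"
proof -
  interpret iterated_distributive_law C Ho Mo So Ha Ma Sa \<eta> lam \<epsilon> lams inc
    using cat H M eta lam_nat S inc_nat colim eps_hom eps_def lams_hom lams_def
    by (rule iterated_distributive_law.intro)
  show ?thesis
    using lifting_compatible by blast
qed

end
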